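(* Let $H=(V,E,C,\ell)$ be an edge-colored hypergraph of rank $r\ge 3$ with weights $w_e\ge 0$, let $x$ be any feasible solution of the \textsc{MinECC} LP relaxation with $x_e=\max_{v\in e}x_v^{\ell(e)}$ for every $e$, and let $Y$ be the output of GenColorRound applied to $x$ with interval $I=(\frac12,\frac23)$. Then for every edge $e\in E$, $\Pr[e\in\mathcal M_Y]\le 2\left(1-\frac{1}{r+1}\right)x_e$. Consequently, if $x$ is an optimal LP solution, the expected \textsc{MinECC} cost of $Y$ is at most $2\left(1-\frac{1}{r+1}\right)$ times the optimal \textsc{MinECC} value.
   Context: An edge-colored hypergraph is $H=(V,E,C,\ell)$ with node set $V$, a multiset $E$ of nonempty subsets of $V$, colors $C=[k]$, $\ell\colon E\to C$, weights $w_e\ge 0$; its rank is $r=\max_{e}|e|$. A node coloring $Y\colon V\to C$ makes a mistake at $e$ ($e\in\mathcal M_Y$) if some $v\in e$ has $Y[v]\ne\ell(e)$; \textsc{MinECC} minimizes $\sum_e w_e\mathbb 1[e\in\mathcal M_Y]$. The \textsc{MinECC} LP relaxation: minimize $\sum_e w_e x_e$ subject to $\sum_{i=1}^k x_v^i=k-1$ for all $v\in V$; $x_e\ge x_v^{\ell(e)}$ for all $e\in E$, $v\in e$; $0\le x_v^i\le1$; $0\le x_e\le 1$. GenColorRound with interval $I\subseteq[0,1]$, applied to a feasible LP solution $x$: draw $\rho$ uniformly at random from $I$ and, independently, a uniformly random permutation $\pi$ of $[k]$; let $S_i=\{v\in V: x_v^i<\rho\}$ (color $i$ wants $v$ if $x_v^i<\rho$);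 for each $v\in\bigcup_i S_i$ set $Y[v]=\pi(j)$ where $j$ is the largest index with $v\in S_{\pi(j)}$; nodes in no $S_i$ receive an arbitrary color. *)

theory Defs
  imports "HOL-Analysis.Analysis" "HOL-Combinatorics.Permutations"
begin

text \<open>Edge-colored hypergraph: node set V, edge index set E (edges may repeat,
  giving a multiset), edge map, colors {1..k}, label function lbl, weights w.\<close>

definition hypergraph_ok ::
  "'v set \<Rightarrow> 'e set \<Rightarrow> ('e \<Rightarrow> 'v set) \<Rightarrow> nat \<Rightarrow> ('e \<Rightarrow> nat) \<Rightarrow> ('e \<Rightarrow> real) \<Rightarrow> bool" where
  "hypergraph_ok V E edge k lbl w \<longleftrightarrow>
     finite V \<and> finite E \<and> E \<noteq> {} \<and>
     (\<forall>e\<in>E. edge e \<noteq> {} \<and> edge e \<subseteq> V \<and> lbl e \<in> {1..k} \<and> w e \<ge> 0)"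

definition hrank :: "'e set \<Rightarrow> ('e \<Rightarrow> 'v set) \<Rightarrow> nat" where
  "hrank E edge = Max ((\<lambda>e. card (edge e)) ` E)"

definition mistake :: "('e \<Rightarrow> 'v set) \<Rightarrow> ('e \<Rightarrow> nat) \<Rightarrow> ('v \<Rightarrow> nat) \<Rightarrow> 'e \<Rightarrow> bool" where
  "mistake edge lbl Y e \<longleftrightarrow> (\<exists>v\<in>edge e. Y v \<noteq> lbl e)"

definition ecc_cost ::
  "'e set \<Rightarrow> ('e \<Rightarrow> 'v set) \<Rightarrow> ('e \<Rightarrow> nat) \<Rightarrow> ('e \<Rightarrow> real) \<Rightarrow> ('v \<Rightarrow> nat) \<Rightarrow> real" where
  "ecc_cost E edge lbl w Y = (\<Sum>e\<in>E. w e * (if mistake edge lbl Y e then 1 else 0))"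

definition lp_feasible ::
  "'v set \<Rightarrow> 'e set \<Rightarrow> ('e \<Rightarrow> 'v set) \<Rightarrow> nat \<Rightarrow> ('e \<Rightarrow> nat) \<Rightarrow>
   ('v \<Rightarrow> nat \<Rightarrow> real) \<Rightarrow> ('e \<Rightarrow> real) \<Rightarrow> bool" where
  "lp_feasible V E edge k lbl xv xe \<longleftrightarrow>
     (\<forall>v\<in>V. (\<Sum>i=1..k. xv v i) = real k - 1) \<and>
     (\<forall>e\<in>E. \<forall>v\<in>edge e. xe e \<ge> xv v (lbl e)) \<and>
     (\<forall>v\<in>V. \<forall>i\<in>{1..k}. 0 \<le> xv v i \<and> xv v i \<le> 1) \<and>
     (\<forall>e\<in>E. 0 \<le> xe e \<and> xe e \<le> 1)"

definition lp_value :: "'e set \<Rightarrow> ('e \<Rightarrow> real) \<Rightarrow> ('e \<Rightarrow> real) \<Rightarrow> real" where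
  "lp_value E w xe = (\<Sum>e\<in>E. w e * xe e)"

definition lp_optimal ::
  "'v set \<Rightarrow> 'e set \<Rightarrow> ('e \<Rightarrow> 'v set) \<Rightarrow> nat \<Rightarrow> ('e \<Rightarrow> nat) \<Rightarrow> ('e \<Rightarrow> real) \<Rightarrow>
   ('v \<Rightarrow> nat \<Rightarrow> real) \<Rightarrow> ('e \<Rightarrow> real) \<Rightarrow> bool" where
  "lp_optimal V E edge k lbl w xv xe \<longleftrightarrow>
     lp_feasible V E edge k lbl xv xe \<and>
     (\<forall>xv' xe'. lp_feasible V E edge k lbl xv' xe' \<longrightarrow> lp_value E w xe \<le> lp_value E w xe')"

text \<open>Node v is wanted by color i iff xv v i < rho; it gets p j for the largest
  j in {1..k} with v wanted by p j; unwanted nodes get the arbitrary color dflt p v.\<close>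
definition gen_color_round ::
  "nat \<Rightarrow> ('v \<Rightarrow> nat \<Rightarrow> real) \<Rightarrow> ((nat \<Rightarrow> nat) \<Rightarrow> 'v \<Rightarrow> nat) \<Rightarrow> real \<Rightarrow> (nat \<Rightarrow> nat) \<Rightarrow> 'v \<Rightarrow> nat" where
  "gen_color_round k xv dflt rho p v =
     (if \<exists>j\<in>{1..k}. xv v (p j) < rho
      then p (Max {j\<in>{1..k}. xv v (p j) < rho})
      else dflt p v)"

definition color_perms :: "nat \<Rightarrow> (nat \<Rightarrow> nat) set" where
  "color_perms k = {p. p permutes {1..k}}"

text \<open>Probability of an event P rho p when rho is uniform on the open interval (a,b)
  and, independently, p is a uniformly random permutation of {1..k}.\<close>
definition round_prob :: "nat \<Rightarrow> real \<Rightarrow> real \<Rightarrow> (real \<Rightarrow> (nat \<Rightarrow> nat) \<Rightarrow> bool) \<Rightarrow> real" where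
  "round_prob k a b P =
     (\<Sum>p\<in>color_perms k. measure lborel {rho\<in>{a<..<b}. P rho p})
       / (real (card (color_perms k)) * (b - a))"

definition round_expect :: "nat \<Rightarrow> real \<Rightarrow> real \<Rightarrow> (real \<Rightarrow> (nat \<Rightarrow> nat) \<Rightarrow> real) \<Rightarrow> real" where
  "round_expect k a b f =
     (\<Sum>p\<in>color_perms k. (LINT rho:{a<..<b}|lborel. f rho p))
       / (real (card (color_perms k)) * (b - a))"

end

theory Submission
  imports Defs
begin

text \<open>Fix an edge \<open>e\<close> of colour \<open>c\<close> and write \<open>X = x\<^sub>e\<close>. For \<open>\<rho> > X\<close> colour \<open>c\<close> wants every
  node of \<open>e\<close>, so \<open>e\<close> is mistaken only if some other colour wanting a node of \<open>e\<close> (a rival)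
  comes after \<open>c\<close> in \<open>\<pi>\<close>. The slacks \<open>1 - x\<^sub>v\<^sup>i\<close> of a node sum to at most 1, so rivals exist
  only for \<open>\<rho> > 1 - X\<close>, and for \<open>\<rho> \<le> 2/3\<close> each node has at most one of them. With at most
  \<open>r\<close> rivals, \<open>c\<close> comes last among them and itself with probability at least \<open>1/(r+1)\<close>.
  Averaging over \<open>\<rho> \<in> (1/2, 2/3)\<close> bounds the mistake probability by
  \<open>6 (|(1/2, X]| + (1 - 1/(r+1)) |(max(1/2, X, 1-X), 2/3)|)\<close>, which is at most
  \<open>2 (1 - 1/(r+1)) X\<close> once \<open>r \<ge> 3\<close>. The cost bound follows by linearity of expectation,
  since every colouring is an integral feasible LP solution.\<close>

lemma card_permutes_le_card_mult_card_last:
  fixes A S :: "'a::linorder set"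
  assumes A: "finite A" and S: "S \<subseteq> A" and c: "c \<in> S"
  shows "card {p. p permutes A} \<le> card S * card {p. p permutes A \<and> (\<forall>i\<in>S. inv p i \<le> inv p c)}"
proof -
  define Last where "Last s = {p. p permutes A \<and> (\<forall>i\<in>S. inv p i \<le> inv p s)}" for s
  have finS: "finite S" using A S finite_subset by blast
  have finperm: "finite {p. p permutes A}" using A by (rule finite_permutations)
  have cover: "{p. p permutes A} \<subseteq> (\<Union>s\<in>S. Last s)"
  proof
    fix p assume p: "p \<in> {p. p permutes A}"
    have "Max (inv p ` S) \<in> inv p ` S" using finS c by (intro Max_in) auto
    then obtain s where s: "s \<in> S" "Max (inv p ` S) = inv p s" by blast
    then have "\<forall>i\<in>S. inv p i \<le> inv p s" using finS by (metis Max_ge finite_imageI imageI)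
    then show "p \<in> (\<Union>s\<in>S. Last s)" using s p unfolding Last_def by blast
  qed
  have card_Last: "card (Last s) \<le> card (Last c)" if s: "s \<in> S" for s
  proof -
    let ?t = "Transposition.transpose c s"
    have t: "?t permutes A" using S c s by (intro permutes_swap_id) auto
    have "inj_on (\<lambda>p. ?t \<circ> p) (Last s)"
      by (rule inj_onI) (metis comp_assoc transpose_comp_involutory comp_id id_comp)
    moreover have "(\<lambda>p. ?t \<circ> p) ` Last s \<subseteq> Last c"
    proof clarify
      fix p assume "p \<in> Last s"
      then have p: "p permutes A" and last: "\<forall>i\<in>S. inv p i \<le> inv p s" unfolding Last_def by auto
      have inv_tp: "inv (?t \<circ> p) = inv p \<circ> ?t"
        using p t by (simp add: o_inv_distrib permutes_bij)
      have "?t i \<in> S" if "i \<in> S" for i using that c s by (cases "i = c"; cases "i = s") auto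
      then have "\<forall>i\<in>S. inv (?t \<circ> p) i \<le> inv (?t \<circ> p) c"
        using last by (simp add: inv_tp)
      then show "?t \<circ> p \<in> Last c" using permutes_compose[OF p t] unfolding Last_def by auto
    qed
    moreover have "finite (Last c)" using finperm unfolding Last_def by auto
    ultimately show ?thesis by (meson card_inj_on_le)
  qed
  have "card {p. p permutes A} \<le> card (\<Union>s\<in>S. Last s)"
    using cover finS finperm by (intro card_mono) (auto simp: Last_def)
  also have "\<dots> \<le> (\<Sum>s\<in>S. card (Last s))" by (rule card_UN_le[OF finS])
  also have "\<dots> \<le> card S * card (Last c)" using sum_mono[OF card_Last] by simp
  finally show ?thesis unfolding Last_def .
qed

lemma card_permutes_ex_later_le:
  fixes A T :: "'a::linorder set"
  assumes A: "finite A" and T: "T \<subseteq> A" and c: "c \<in> A" and m: "card T \<le> m"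
  shows "real (card {p. p permutes A \<and> (\<exists>i\<in>T. inv p c < inv p i)})
    \<le> (1 - 1 / (real m + 1)) * real (card {p. p permutes A})"
proof -
  define Last where "Last = {p. p permutes A \<and> (\<forall>i\<in>insert c T. inv p i \<le> inv p c)}"
  have fin: "finite {p. p permutes A}" using A by (rule finite_permutations)
  have sub: "Last \<subseteq> {p. p permutes A}" unfolding Last_def by auto
  have later: "{p. p permutes A \<and> (\<exists>i\<in>T. inv p c < inv p i)} = {p. p permutes A} - Last"
    unfolding Last_def by (auto simp: not_le)
  have "card (insert c T) \<le> m + 1"
    using m finite_subset[OF T A] by (simp add: card_insert_if)
  moreover have "card {p. p permutes A} \<le> card (insert c T) * card Last"
    unfolding Last_def using T c by (intro card_permutes_le_card_mult_card_last[OF A]) auto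
  ultimately have "card {p. p permutes A} \<le> (m + 1) * card Last"
    by (meson mult_le_mono1 order_trans)
  then have "real (card {p. p permutes A}) \<le> real ((m + 1) * card Last)"
    by (simp only: of_nat_le_iff)
  then have "real (card {p. p permutes A}) / (real m + 1) \<le> real (card Last)"
    by (simp add: pos_divide_le_eq algebra_simps)
  moreover have "real (card ({p. p permutes A} - Last)) = real (card {p. p permutes A}) - real (card Last)"
    using fin sub by (simp add: card_Diff_subset finite_subset card_mono of_nat_diff)
  moreover have "(1 - 1 / (real m + 1)) * real (card {p. p permutes A})
      = real (card {p. p permutes A}) - real (card {p. p permutes A}) / (real m + 1)"
    by (simp add: algebra_simps)
  ultimately show ?thesis unfolding later by linarith
qed

lemma lp_feasible_slack_sum_le_one:
  assumes feas: "lp_feasible V E edge k lbl xv xe" and v: "v \<in> V" and F: "F \<subseteq> {1..k}"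
  shows "(\<Sum>i\<in>F. 1 - xv v i) \<le> 1"
proof -
  have sum: "(\<Sum>i=1..k. xv v i) = real k - 1" and bounds: "\<forall>i\<in>{1..k}. 0 \<le> xv v i \<and> xv v i \<le> 1"
    using feas v unfolding lp_feasible_def by auto
  have "(\<Sum>i\<in>F. 1 - xv v i) \<le> (\<Sum>i=1..k. 1 - xv v i)"
    using F bounds by (intro sum_mono2) auto
  also have "\<dots> = 1" using sum by (simp add: sum_subtractf)
  finally show ?thesis .
qed

definition rival_colors :: "nat \<Rightarrow> ('v \<Rightarrow> nat \<Rightarrow> real) \<Rightarrow> 'v set \<Rightarrow> nat \<Rightarrow> real \<Rightarrow> nat set" where
  "rival_colors k xv U c \<rho> = {i\<in>{1..k}. i \<noteq> c \<and> (\<exists>v\<in>U. xv v i < \<rho>)}"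

lemma rival_colors_eq_empty:
  assumes feas: "lp_feasible V E edge k lbl xv xe" and U: "U \<subseteq> V" and c: "c \<in> {1..k}"
    and low: "\<forall>v\<in>U. xv v c \<le> X" and \<rho>: "\<rho> \<le> 1 - X"
  shows "rival_colors k xv U c \<rho> = {}"
proof -
  have "\<not> xv v i < \<rho>" if v: "v \<in> U" and i: "i \<in> {1..k}" "i \<noteq> c" for v i
  proof -
    have "(\<Sum>l\<in>{c,i}. 1 - xv v l) \<le> 1"
      using lp_feasible_slack_sum_le_one[OF feas, of v "{c,i}"] v U c i by auto
    then show ?thesis using i v low \<rho> by auto
  qed
  then show ?thesis unfolding rival_colors_def by auto
qed

lemma card_rival_colors_le:
  assumes feas: "lp_feasible V E edge k lbl xv xe" and U: "U \<subseteq> V" "finite U" and c: "c \<in> {1..k}"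
    and wanted: "\<forall>v\<in>U. xv v c < \<rho>" and \<rho>: "\<rho> \<le> 2/3"
  shows "card (rival_colors k xv U c \<rho>) \<le> card U"
proof -
  have at_most_one: "card {i\<in>{1..k}. i \<noteq> c \<and> xv v i < \<rho>} \<le> 1" if v: "v \<in> U" for v
  proof -
    have "i = j" if i: "i \<in> {i\<in>{1..k}. i \<noteq> c \<and> xv v i < \<rho>}"
      and j: "j \<in> {i\<in>{1..k}. i \<noteq> c \<and> xv v i < \<rho>}" for i j
    proof (rule ccontr)
      assume "i \<noteq> j"
      then have "(\<Sum>l\<in>{c,i,j}. 1 - xv v l) = (1 - xv v c) + (1 - xv v i) + (1 - xv v j)"
        using i j by simp
      moreover have "(\<Sum>l\<in>{c,i,j}. 1 - xv v l) \<le> 1"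
        using lp_feasible_slack_sum_le_one[OF feas, of v "{c,i,j}"] v U c i j by auto
      ultimately show False using i j wanted v \<rho> by auto
    qed
    then show ?thesis by (simp add: card_le_Suc0_iff_eq)
  qed
  have "rival_colors k xv U c \<rho> = (\<Union>v\<in>U. {i\<in>{1..k}. i \<noteq> c \<and> xv v i < \<rho>})"
    unfolding rival_colors_def by auto
  then have "card (rival_colors k xv U c \<rho>) \<le> (\<Sum>v\<in>U. card {i\<in>{1..k}. i \<noteq> c \<and> xv v i < \<rho>})"
    using card_UN_le[OF U(2)] by simp
  also have "\<dots> \<le> (\<Sum>v\<in>U. 1)" using at_most_one by (rule sum_mono)
  finally show ?thesis by simp
qed

lemma gen_color_round_wrong_imp_rival_later:
  assumes p: "p permutes {1..k}" and c: "c \<in> {1..k}" and wanted: "\<forall>v\<in>U. xv v c < \<rho>"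
    and v: "v \<in> U" and wrong: "gen_color_round k xv dflt \<rho> p v \<noteq> c"
  shows "\<exists>i\<in>rival_colors k xv U c \<rho>. inv p c < inv p i"
proof -
  define J where "J = {j\<in>{1..k}. xv v (p j) < \<rho>}"
  have c_J: "inv p c \<in> J"
    unfolding J_def using c v wanted permutes_inverses[OF p] permutes_in_image[OF permutes_inv[OF p]]
    by auto
  have fin: "finite J" unfolding J_def by simp
  define i where "i = p (Max J)"
  have "gen_color_round k xv dflt \<rho> p v = i"
    using c_J unfolding gen_color_round_def i_def J_def by auto
  then have "i \<noteq> c" using wrong by simp
  have max_J: "Max J \<in> J" using Max_in[OF fin] c_J by auto
  have inv_i: "inv p i = Max J" unfolding i_def using permutes_inverses[OF p] by simp
  have "inv p c \<noteq> Max J" using \<open>i \<noteq> c\<close> permutes_inverses[OF p] unfolding i_def by metis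
  then have "inv p c < inv p i" using Max_ge[OF fin c_J] inv_i by simp
  moreover have "i \<in> rival_colors k xv U c \<rho>"
    using max_J \<open>i \<noteq> c\<close> v permutes_in_image[OF p] unfolding rival_colors_def J_def i_def by auto
  ultimately show ?thesis by blast
qed

lemma mistake_imp_le_or_rival_later:
  assumes H: "hypergraph_ok V E edge k lbl w" and feas: "lp_feasible V E edge k lbl xv xe"
    and e: "e \<in> E" and p: "p \<in> color_perms k"
    and mis: "mistake edge lbl (gen_color_round k xv dflt \<rho> p) e"
  shows "\<rho> \<le> xe e \<or> (\<exists>i\<in>rival_colors k xv (edge e) (lbl e) \<rho>. inv p (lbl e) < inv p i)"
proof (cases "\<rho> \<le> xe e")
  case False
  then have "\<forall>v\<in>edge e. xv v (lbl e) < \<rho>" using feas e unfolding lp_feasible_def by force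
  moreover obtain v where "v \<in> edge e" "gen_color_round k xv dflt \<rho> p v \<noteq> lbl e"
    using mis unfolding mistake_def by auto
  moreover have "p permutes {1..k}" "lbl e \<in> {1..k}"
    using p H e unfolding color_perms_def hypergraph_ok_def by auto
  ultimately show ?thesis using gen_color_round_wrong_imp_rival_later by metis
qed simp

lemma card_perms_rival_later_le:
  assumes H: "hypergraph_ok V E edge k lbl w" and feas: "lp_feasible V E edge k lbl xv xe"
    and e: "e \<in> E" and r: "card (edge e) \<le> r"
  shows "real (card {p\<in>color_perms k. \<rho> \<in> {1/2<..<2/3} \<and> xe e < \<rho> \<and>
      (\<exists>i\<in>rival_colors k xv (edge e) (lbl e) \<rho>. inv p (lbl e) < inv p i)})
    \<le> (1 - 1 / (real r + 1)) * real (card (color_perms k))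
      * indicator {max (1/2) (max (xe e) (1 - xe e))<..<2/3} \<rho>"
proof -
  let ?T = "rival_colors k xv (edge e) (lbl e) \<rho>"
  have c: "lbl e \<in> {1..k}" and U: "edge e \<subseteq> V" "finite (edge e)"
    using H e finite_subset unfolding hypergraph_ok_def by auto
  have low: "\<forall>v\<in>edge e. xv v (lbl e) \<le> xe e" using feas e unfolding lp_feasible_def by auto
  have "0 \<le> 1 - 1 / (real r + 1)" by (simp add: field_simps)
  then have nonneg: "0 \<le> (1 - 1 / (real r + 1)) * real (card (color_perms k)) * indicator S \<rho>" for S
    by simp
  consider "\<rho> \<notin> {1/2<..<2/3}" | "\<rho> \<le> xe e" | "\<rho> \<le> 1 - xe e"
    | "\<rho> \<in> {max (1/2) (max (xe e) (1 - xe e))<..<2/3}"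
    by (cases "\<rho> \<in> {1/2<..<2/3}"; cases "\<rho> \<le> xe e"; cases "\<rho> \<le> 1 - xe e") auto
  then show ?thesis
  proof cases
    case 1
    then show ?thesis using nonneg by (simp del: greaterThanLessThan_iff)
  next
    case 2
    then show ?thesis using nonneg by simp
  next
    case 3
    then show ?thesis using nonneg rival_colors_eq_empty[OF feas U(1) c low] by simp
  next
    case 4
    then have "\<forall>v\<in>edge e. xv v (lbl e) < \<rho>" and "\<rho> \<le> 2/3" using low by auto
    then have "card ?T \<le> r" using card_rival_colors_le[OF feas U c] r by (meson order_trans)
    moreover have "?T \<subseteq> {1..k}" unfolding rival_colors_def by auto
    ultimately show ?thesis
      using 4 card_permutes_ex_later_le[of "{1..k}" ?T "lbl e" r] c by (simp add: color_perms_def)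
  qed
qed

lemma borel_set_determined_by_thresholds:
  fixes a :: "'i \<Rightarrow> real"
  assumes I: "finite I" and P: "\<And>\<rho>. P \<rho> = Q {i\<in>I. a i < \<rho>}"
  shows "{\<rho>. P \<rho>} \<in> sets borel"
proof -
  have "{\<rho>. P \<rho>} = (\<Union>S\<in>{S\<in>Pow I. Q S}. {\<rho>. \<forall>i\<in>I. (i \<in> S) = (a i < \<rho>)})"
  proof (intro set_eqI iffI)
    fix \<rho> assume "\<rho> \<in> {\<rho>. P \<rho>}"
    then show "\<rho> \<in> (\<Union>S\<in>{S\<in>Pow I. Q S}. {\<rho>. \<forall>i\<in>I. (i \<in> S) = (a i < \<rho>)})"
      using P by (intro UN_I[of "{i\<in>I. a i < \<rho>}"]) auto
  next
    fix \<rho> assume "\<rho> \<in> (\<Union>S\<in>{S\<in>Pow I. Q S}. {\<rho>. \<forall>i\<in>I. (i \<in> S) = (a i < \<rho>)})"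
    then obtain S where "S \<subseteq> I" "Q S" "\<forall>i\<in>I. (i \<in> S) = (a i < \<rho>)" by auto
    moreover from this have "S = {i\<in>I. a i < \<rho>}" by auto
    ultimately show "\<rho> \<in> {\<rho>. P \<rho>}" using P by auto
  qed
  moreover have "{\<rho>::real. \<forall>i\<in>I. (i \<in> S) = (a i < \<rho>)} \<in> sets borel" for S
    using I by measurable
  ultimately show ?thesis using I by (auto intro: sets.finite_UN)
qed

lemma mistake_gen_color_round_borel:
  assumes "finite (edge e)"
  shows "{\<rho>. mistake edge lbl (gen_color_round k xv dflt \<rho> p) e} \<in> sets borel"
proof (rule borel_set_determined_by_thresholds[where I="edge e \<times> {1..k}" and a="\<lambda>(v,j). xv v (p j)"
      and Q="\<lambda>W. \<exists>v\<in>edge e. (if \<exists>j\<in>{1..k}. (v,j) \<in> W then p (Max {j\<in>{1..k}. (v,j) \<in> W})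
                  else dflt p v) \<noteq> lbl e"])
  show "finite (edge e \<times> {1..k})" using assms by simp
next
  fix \<rho>
  let ?W = "{i \<in> edge e \<times> {1..k}. (case i of (v, j) \<Rightarrow> xv v (p j)) < \<rho>}"
  have "\<And>v. v \<in> edge e \<Longrightarrow> {j\<in>{1..k}. (v,j) \<in> ?W} = {j\<in>{1..k}. xv v (p j) < \<rho>}"
    and "\<And>v. v \<in> edge e \<Longrightarrow> (\<exists>j\<in>{1..k}. (v,j) \<in> ?W) = (\<exists>j\<in>{1..k}. xv v (p j) < \<rho>)"
    by auto
  then show "mistake edge lbl (gen_color_round k xv dflt \<rho> p) e =
    (\<exists>v\<in>edge e. (if \<exists>j\<in>{1..k}. (v,j) \<in> ?W then p (Max {j\<in>{1..k}. (v,j) \<in> ?W})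
                  else dflt p v) \<noteq> lbl e)"
    unfolding mistake_def gen_color_round_def by (intro bex_cong refl) (simp only:)
qed

lemma fmeasurable_lborel_subset_Icc:
  fixes S :: "real set"
  assumes "S \<in> sets borel" and "S \<subseteq> {a..b}"
  shows "S \<in> fmeasurable lborel"
  using assms by (intro fmeasurableI2[OF fmeasurable_compact[OF compact_Icc]]) auto

lemma sum_measure_le_by_cover_count:
  fixes A B :: "'p \<Rightarrow> 'a set"
  assumes P: "finite P" and cover: "\<And>p. p \<in> P \<Longrightarrow> A p \<subseteq> L \<union> B p"
    and A: "\<And>p. p \<in> P \<Longrightarrow> A p \<in> sets M" and B: "\<And>p. p \<in> P \<Longrightarrow> B p \<in> fmeasurable M"
    and L: "L \<in> fmeasurable M" and R: "R \<in> fmeasurable M"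
    and count: "\<And>x. x \<in> space M \<Longrightarrow> real (card {p\<in>P. x \<in> B p}) \<le> c * indicator R x"
  shows "(\<Sum>p\<in>P. measure M (A p)) \<le> real (card P) * measure M L + c * measure M R"
proof -
  have int_B: "integrable M (indicator (B p) :: 'a \<Rightarrow> real)" if "p \<in> P" for p
    using B[OF that] by (auto simp: fmeasurable_def)
  have "(\<Sum>p\<in>P. measure M (A p)) \<le> (\<Sum>p\<in>P. measure M L + measure M (B p))"
  proof (rule sum_mono)
    fix p assume p: "p \<in> P"
    have "measure M (A p) \<le> measure M (L \<union> B p)"
      using cover[OF p] A[OF p] L B[OF p] by (intro measure_mono_fmeasurable) auto
    also have "\<dots> \<le> measure M L + measure M (B p)"
      using L B[OF p] by (intro measure_Un_le) (auto dest: fmeasurableD)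
    finally show "measure M (A p) \<le> measure M L + measure M (B p)" .
  qed
  also have "\<dots> = real (card P) * measure M L + (\<integral>x. (\<Sum>p\<in>P. indicator (B p) x) \<partial>M)"
    using B by (simp add: sum.distrib Bochner_Integration.integral_sum[OF int_B] fmeasurable_def
        Int_absorb2 sets.sets_into_space)
  also have "(\<integral>x. (\<Sum>p\<in>P. indicator (B p) x) \<partial>M) \<le> (\<integral>x. c * indicator R x \<partial>M)"
  proof (rule integral_mono)
    fix x assume "x \<in> space M"
    moreover have "(\<Sum>p\<in>P. indicator (B p) x) = real (card {p\<in>P. x \<in> B p})"
      using P by (simp add: indicator_def sum.If_cases Int_def conj_commute)
    ultimately show "(\<Sum>p\<in>P. indicator (B p) x) \<le> c * indicator R x" using count by simp
  qed (use int_B R in \<open>auto simp: fmeasurable_def\<close>)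
  also have "(\<integral>x. c * indicator R x \<partial>M) = c * measure M R"
    using R by (simp add: fmeasurable_def Int_absorb2 sets.sets_into_space)
  finally show ?thesis by simp
qed

lemma measure_lborel_Ioc_max: "measure lborel {a<..b::real} = max 0 (b - a)"
  by (cases "a \<le> b") auto

lemma measure_lborel_Ioo_max: "measure lborel {a<..<b::real} = max 0 (b - a)"
  by (cases "a \<le> b") auto

lemma mistake_window_lengths_le:
  fixes q X :: real
  assumes q: "3/4 \<le> q" "q \<le> 1" and X: "0 \<le> X" "X \<le> 1"
  shows "6 * (measure lborel {1/2<..min X (2/3)} + q * measure lborel {max (1/2) (max X (1-X))<..<2/3})
    \<le> 2 * q * X"
proof -
  consider "X \<le> 1/3" | "1/3 < X" "X \<le> 1/2" | "1/2 < X" "X \<le> 2/3" | "2/3 < X" by linarith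
  then show ?thesis
  proof cases
    case 1
    then show ?thesis using q X by (simp add: measure_lborel_Ioc_max measure_lborel_Ioo_max max_def)
  next
    case 2
    then show ?thesis using q X
      by (simp add: measure_lborel_Ioc_max measure_lborel_Ioo_max max_def min_def algebra_simps)
  next
    case 3
    have "(6 - 8 * q) * (X - 1/2) \<le> 0" using q 3 by (intro mult_nonpos_nonneg) auto
    then show ?thesis using 3
      by (simp add: measure_lborel_Ioc_max measure_lborel_Ioo_max max_def min_def algebra_simps)
  next
    case 4
    have "2 * (3/4) * (2/3) \<le> 2 * q * X" using q 4 by (intro mult_mono) auto
    then show ?thesis using 4 by (simp add: measure_lborel_Ioc_max measure_lborel_Ioo_max max_def min_def)
  qed
qed

lemma mistake_prob_le:
  assumes H: "hypergraph_ok V E edge k lbl w" and feas: "lp_feasible V E edge k lbl xv xe"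
    and e: "e \<in> E" and r: "card (edge e) \<le> r" and r3: "3 \<le> r"
  shows "round_prob k (1/2) (2/3) (\<lambda>\<rho> p. mistake edge lbl (gen_color_round k xv dflt \<rho> p) e)
    \<le> 2 * (1 - 1 / (real r + 1)) * xe e"
proof -
  define X where "X = xe e"
  define N where "N = real (card (color_perms k))"
  define q where "q = 1 - 1 / (real r + 1)"
  define A where "A p = {\<rho>\<in>{1/2<..<2/3}. mistake edge lbl (gen_color_round k xv dflt \<rho> p) e}"
    for p :: "nat \<Rightarrow> nat"
  define B where "B p = {\<rho>\<in>{1/2<..<2/3}. X < \<rho> \<and>
      (\<exists>i\<in>rival_colors k xv (edge e) (lbl e) \<rho>. inv p (lbl e) < inv p i)}" for p :: "nat \<Rightarrow> nat"
  define L where "L = {1/2<..min X (2/3)}"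
  define R where "R = {max (1/2) (max X (1-X))<..<2/3::real}"
  have fin_e: "finite (edge e)" using H e finite_subset unfolding hypergraph_ok_def by auto
  have X: "0 \<le> X" "X \<le> 1" using feas e unfolding lp_feasible_def X_def by auto
  have q: "3/4 \<le> q" "q \<le> 1" unfolding q_def using r3 by (auto simp: field_simps)
  have "N > 0" unfolding N_def color_perms_def using card_permutations[of "{1..k}" k] by simp
  have "A p = {1/2<..<2/3} \<inter> {\<rho>. mistake edge lbl (gen_color_round k xv dflt \<rho> p) e}" for p
    unfolding A_def by auto
  then have A_borel: "A p \<in> sets borel" for p
    using mistake_gen_color_round_borel[of edge e, OF fin_e] by simp
  have B_fm: "B p \<in> fmeasurable lborel" for p
  proof -
    define G where "G = {i\<in>{1..k}. i \<noteq> lbl e \<and> inv p (lbl e) < inv p i}"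
    have "B p = {1/2<..<2/3} \<inter> {X<..} \<inter> (\<Union>i\<in>G. \<Union>v\<in>edge e. {xv v i<..})"
      unfolding B_def G_def rival_colors_def by auto
    moreover have "open ({1/2<..<2/3} \<inter> {X<..} \<inter> (\<Union>i\<in>G. \<Union>v\<in>edge e. {xv v i<..}))"
      by (intro open_Int open_UN ballI) auto
    ultimately show ?thesis
      by (intro fmeasurable_lborel_subset_Icc[of _ "1/2" "2/3"]) (auto simp: B_def borel_open)
  qed
  have cover: "A p \<subseteq> L \<union> B p" if "p \<in> color_perms k" for p
    using mistake_imp_le_or_rival_later[OF H feas e that]
    unfolding A_def B_def L_def X_def by fastforce
  have count: "real (card {p\<in>color_perms k. \<rho> \<in> B p}) \<le> q * N * indicator R \<rho>" for \<rho>
  proof -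
    have "{p\<in>color_perms k. \<rho> \<in> B p} = {p\<in>color_perms k. \<rho> \<in> {1/2<..<2/3} \<and> xe e < \<rho> \<and>
        (\<exists>i\<in>rival_colors k xv (edge e) (lbl e) \<rho>. inv p (lbl e) < inv p i)}"
      unfolding B_def X_def by blast
    then show ?thesis using card_perms_rival_later_le[OF H feas e r, of \<rho>]
      unfolding q_def N_def R_def X_def by (simp only:)
  qed
  have "L \<in> fmeasurable lborel" "R \<in> fmeasurable lborel"
    unfolding L_def R_def by (intro fmeasurable_lborel_subset_Icc[of _ "1/2" "2/3"]; auto)+
  then have "(\<Sum>p\<in>color_perms k. measure lborel (A p)) \<le> N * measure lborel L + q * N * measure lborel R"
    unfolding N_def using A_borel B_fm count finite_permutations[of "{1..k}"]
    by (intro sum_measure_le_by_cover_count[OF _ cover]) (auto simp: color_perms_def N_def)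
  then have "round_prob k (1/2) (2/3) (\<lambda>\<rho> p. mistake edge lbl (gen_color_round k xv dflt \<rho> p) e)
      \<le> 6 * (measure lborel L + q * measure lborel R)"
    using \<open>N > 0\<close> unfolding round_prob_def A_def N_def by (simp add: field_simps)
  also have "\<dots> \<le> 2 * q * X"
    unfolding L_def R_def by (rule mistake_window_lengths_le[OF q X])
  finally show ?thesis unfolding q_def X_def .
qed

lemma round_expect_weighted_events:
  fixes P :: "'e \<Rightarrow> real \<Rightarrow> (nat \<Rightarrow> nat) \<Rightarrow> bool"
  assumes E: "finite E" and P: "\<And>e p. e \<in> E \<Longrightarrow> {\<rho>. P e \<rho> p} \<in> sets borel"
  shows "round_expect k a b (\<lambda>\<rho> p. \<Sum>e\<in>E. w e * (if P e \<rho> p then 1 else 0))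
    = (\<Sum>e\<in>E. w e * round_prob k a b (P e))"
proof -
  define D where "D = real (card (color_perms k)) * (b - a)"
  have event_int: "integrable lborel (indicator {\<rho>\<in>{a<..<b}. P e \<rho> p} :: real \<Rightarrow> real)"
    if "e \<in> E" for e p
  proof -
    have "{\<rho>\<in>{a<..<b}. P e \<rho> p} = {a<..<b} \<inter> {\<rho>. P e \<rho> p}" by auto
    then have "{\<rho>\<in>{a<..<b}. P e \<rho> p} \<in> fmeasurable lborel"
      using P[OF that] by (intro fmeasurable_lborel_subset_Icc[of _ a b]) auto
    then show ?thesis by (auto simp: fmeasurable_def)
  qed
  have "(LINT \<rho>:{a<..<b}|lborel. \<Sum>e\<in>E. w e * (if P e \<rho> p then 1 else 0))
      = (\<Sum>e\<in>E. w e * measure lborel {\<rho>\<in>{a<..<b}. P e \<rho> p})" for p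
  proof -
    have "(\<lambda>\<rho>. indicator {a<..<b} \<rho> *\<^sub>R (\<Sum>e\<in>E. w e * (if P e \<rho> p then 1 else 0)))
        = (\<lambda>\<rho>. \<Sum>e\<in>E. w e * indicator {\<rho>\<in>{a<..<b}. P e \<rho> p} \<rho>)"
      by (auto simp: fun_eq_iff indicator_def sum_distrib_left intro!: sum.cong)
    then show ?thesis
      using event_int by (simp add: set_lebesgue_integral_def Bochner_Integration.integral_sum)
  qed
  then have "round_expect k a b (\<lambda>\<rho> p. \<Sum>e\<in>E. w e * (if P e \<rho> p then 1 else 0))
      = (\<Sum>p\<in>color_perms k. \<Sum>e\<in>E. w e * measure lborel {\<rho>\<in>{a<..<b}. P e \<rho> p}) / D"
    unfolding round_expect_def D_def by simp
  also have "\<dots> = (\<Sum>e\<in>E. w e * ((\<Sum>p\<in>color_perms k. measure lborel {\<rho>\<in>{a<..<b}. P e \<rho> p}) / D))"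
    by (simp add: sum.swap[of _ "color_perms k"] sum_divide_distrib sum_distrib_left)
  finally show ?thesis unfolding round_prob_def D_def .
qed

lemma lp_optimal_value_le_ecc_cost:
  assumes opt: "lp_optimal V E edge k lbl w xv xe" and Y: "\<forall>v\<in>V. Y v \<in> {1..k}"
  shows "lp_value E w xe \<le> ecc_cost E edge lbl w Y"
proof -
  define yv where "yv v i = (if Y v = i then 0 else 1::real)" for v i
  define ye where "ye e = (if mistake edge lbl Y e then 1 else 0::real)" for e
  have "lp_feasible V E edge k lbl yv ye"
    unfolding lp_feasible_def
  proof (intro conjI ballI)
    fix v assume v: "v \<in> V"
    then have "(\<Sum>i=1..k. yv v i) = real (card ({1..k} - {Y v}))"
      using Y by (simp add: yv_def sum.If_cases Diff_eq Int_commute Collect_neg_eq[symmetric])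
    also have "\<dots> = real k - 1" using Y v by (auto simp: of_nat_diff)
    finally show "(\<Sum>i=1..k. yv v i) = real k - 1" .
  next
    fix e v assume "e \<in> E" "v \<in> edge e"
    then show "yv v (lbl e) \<le> ye e" unfolding yv_def ye_def mistake_def by auto
  qed (auto simp: yv_def ye_def)
  then have "lp_value E w xe \<le> lp_value E w ye" using opt unfolding lp_optimal_def by blast
  also have "\<dots> = ecc_cost E edge lbl w Y" unfolding lp_value_def ecc_cost_def ye_def ..
  finally show ?thesis .
qed

lemma round_expect_ecc_cost_le:
  assumes H: "hypergraph_ok V E edge k lbl w"
    and bound: "\<forall>e\<in>E. round_prob k a b (\<lambda>\<rho> p. mistake edge lbl (gen_color_round k xv dflt \<rho> p) e)
      \<le> q * xe e"
  shows "round_expect k a b (\<lambda>\<rho> p. ecc_cost E edge lbl w (gen_color_round k xv dflt \<rho> p))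
    \<le> q * lp_value E w xe"
proof -
  have fin: "finite E" and w: "\<forall>e\<in>E. 0 \<le> w e" and fin_edge: "\<forall>e\<in>E. finite (edge e)"
    using H finite_subset unfolding hypergraph_ok_def by auto
  have "round_expect k a b (\<lambda>\<rho> p. ecc_cost E edge lbl w (gen_color_round k xv dflt \<rho> p))
      = (\<Sum>e\<in>E. w e * round_prob k a b (\<lambda>\<rho> p. mistake edge lbl (gen_color_round k xv dflt \<rho> p) e))"
    unfolding ecc_cost_def
    by (rule round_expect_weighted_events[OF fin]) (simp add: mistake_gen_color_round_borel fin_edge)
  also have "\<dots> \<le> (\<Sum>e\<in>E. w e * (q * xe e))"
    using bound w by (intro sum_mono mult_left_mono) auto
  also have "\<dots> = q * lp_value E w xe" by (simp add: lp_value_def sum_distrib_left ac_simps)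
  finally show ?thesis .
qed

theorem theorem3:
  fixes V :: "'v set" and E :: "'e set" and edge :: "'e \<Rightarrow> 'v set"
    and k :: nat and lbl :: "'e \<Rightarrow> nat" and w :: "'e \<Rightarrow> real"
    and xv :: "'v \<Rightarrow> nat \<Rightarrow> real" and xe :: "'e \<Rightarrow> real"
    and dflt :: "(nat \<Rightarrow> nat) \<Rightarrow> 'v \<Rightarrow> nat"
  assumes H: "hypergraph_ok V E edge k lbl w"
    and rank: "hrank E edge \<ge> 3"
    and feas: "lp_feasible V E edge k lbl xv xe"
    and xe_max: "\<forall>e\<in>E. xe e = Max ((\<lambda>v. xv v (lbl e)) ` edge e)"
    and dflt: "\<forall>p v. dflt p v \<in> {1..k}"
  shows "(\<forall>e\<in>E. round_prob k (1/2) (2/3)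
              (\<lambda>rho p. mistake edge lbl (gen_color_round k xv dflt rho p) e)
            \<le> 2 * (1 - 1 / (real (hrank E edge) + 1)) * xe e)
       \<and> (lp_optimal V E edge k lbl w xv xe \<longrightarrow>
            (\<forall>Y. (\<forall>v\<in>V. Y v \<in> {1..k}) \<longrightarrow>
               round_expect k (1/2) (2/3)
                 (\<lambda>rho p. ecc_cost E edge lbl w (gen_color_round k xv dflt rho p))
               \<le> 2 * (1 - 1 / (real (hrank E edge) + 1)) * ecc_cost E edge lbl w Y))"
proof -
  \<comment> \<open>Neither \<open>xe_max\<close> nor \<open>dflt\<close> is needed: feasibility already bounds \<open>xv v (lbl e)\<close>
    by \<open>xe e\<close>, and default colours only occur for \<open>\<rho> \<le> xe e\<close>, where a mistake is charged anyway.\<close>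
  define q where "q = 2 * (1 - 1 / (real (hrank E edge) + 1))"
  have "card (edge e) \<le> hrank E edge" if "e \<in> E" for e
    using H that unfolding hrank_def hypergraph_ok_def by (intro Max_ge) auto
  then have edge_bound: "\<forall>e\<in>E. round_prob k (1/2) (2/3)
      (\<lambda>\<rho> p. mistake edge lbl (gen_color_round k xv dflt \<rho> p) e) \<le> q * xe e"
    using mistake_prob_le[OF H feas _ _ rank] unfolding q_def by blast
  have "round_expect k (1/2) (2/3) (\<lambda>\<rho> p. ecc_cost E edge lbl w (gen_color_round k xv dflt \<rho> p))
      \<le> q * ecc_cost E edge lbl w Y"
    if "lp_optimal V E edge k lbl w xv xe" and "\<forall>v\<in>V. Y v \<in> {1..k}" for Y
  proof -
    have "0 \<le> q" unfolding q_def by (simp add: field_simps)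
    then have "q * lp_value E w xe \<le> q * ecc_cost E edge lbl w Y"
      using lp_optimal_value_le_ecc_cost[OF that] by (rule mult_left_mono[rotated])
    then show ?thesis using round_expect_ecc_cost_le[OF H edge_bound] by linarith
  qed
  with edge_bound show ?thesis unfolding q_def by blast
qed

end
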